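(* For every $n\ge2$, the inverse NLFT map $\mathtt S_n\to\mathbb C^n$, $(\mathbf a,\mathbf b)\mapsto\boldsymbol\gamma$, is not uniformly continuous when $\mathtt S_n\subseteq\mathbb C^n\times\mathbb C^n$ and $\mathbb C^n$ carry the Euclidean metric. Explicitly, for $k\ge2$ the pairs $\mathbf a^{(k)}=(\frac1k,0,\dots,0,\sqrt{\frac12-\frac1{k^2}})$, $\mathbf b^{(k)}=(\sqrt{\frac12-\frac1{k^2}},0,\dots,0,-\frac1k)$ lie in $\mathtt S_n$, satisfy $\|\mathbf a^{(k+1)}-\mathbf a^{(k)}\|_2^2+\|\mathbf b^{(k+1)}-\mathbf b^{(k)}\|_2^2\le 10/k^4$, while their inverse NLFTs satisfy $\|\boldsymbol\gamma^{(k+1)}-\boldsymbol\gamma^{(k)}\|_2\ge1/\sqrt2$.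
   Context: For $(\mathbf a,\mathbf b)\in\mathbb C^n\times\mathbb C^n$ let $a(z)=\sum_{k=0}^{n-1}a_kz^{-k}$, $b(z)=\sum_{k=0}^{n-1}b_kz^k$, and $a^*(z):=\overline{a(1/\overline z)}$ (similarly $b^*$). $\mathtt S_n$ is the set of $(\mathbf a,\mathbf b)$ with $a_0$ real and positive and $aa^*+bb^*=1$. The NLFT of $\boldsymbol\gamma$ supported in $\{0,\dots,n-1\}$ is $\prod_{k=0}^{n-1}\frac{1}{\sqrt{1+|\gamma_k|^2}}\begin{pmatrix}1&\gamma_kz^k\\-\overline{\gamma_k}z^{-k}&1\end{pmatrix}=\begin{pmatrix}a&b\\-b^*&a^*\end{pmatrix}$ (ordered by increasing $k$); it is a bijection from such sequences onto $\mathtt S_n$, and its inverse is the inverse NLFT. *)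

theory Defs
  imports Complex_Main
begin

text \<open>Vectors in C^n are represented as functions nat => complex vanishing at indices >= n.
  2x2 complex matrices are represented as quadruples (m11, m12, m21, m22).\<close>

type_synonym cmat2 = "complex \<times> complex \<times> complex \<times> complex"

definition mmult2 :: "cmat2 \<Rightarrow> cmat2 \<Rightarrow> cmat2" where
  "mmult2 M N = (case M of (a, b, c, d) \<Rightarrow> case N of (e, f, g, h) \<Rightarrow>
      (a * e + b * g, a * f + b * h, c * e + d * g, c * f + d * h))"

definition supp_in :: "nat \<Rightarrow> (nat \<Rightarrow> complex) \<Rightarrow> bool" where
  "supp_in n v \<longleftrightarrow> (\<forall>k\<ge>n. v k = 0)"

definition laur_a :: "nat \<Rightarrow> (nat \<Rightarrow> complex) \<Rightarrow> complex \<Rightarrow> complex" where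
  "laur_a n a z = (\<Sum>k<n. a k * inverse z ^ k)"

definition laur_b :: "nat \<Rightarrow> (nat \<Rightarrow> complex) \<Rightarrow> complex \<Rightarrow> complex" where
  "laur_b n b z = (\<Sum>k<n. b k * z ^ k)"

definition star :: "(complex \<Rightarrow> complex) \<Rightarrow> complex \<Rightarrow> complex" where
  "star f z = cnj (f (1 / cnj z))"

definition S_set :: "nat \<Rightarrow> ((nat \<Rightarrow> complex) \<times> (nat \<Rightarrow> complex)) set" where
  "S_set n = {(a, b). supp_in n a \<and> supp_in n b \<and> a 0 \<in> \<real> \<and> Re (a 0) > 0 \<and>
     (\<forall>z. z \<noteq> 0 \<longrightarrow>
        laur_a n a z * star (laur_a n a) z + laur_b n b z * star (laur_b n b) z = 1)}"

definition nlft_factor :: "complex \<Rightarrow> nat \<Rightarrow> complex \<Rightarrow> cmat2" where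
  "nlft_factor g k z = (let c = complex_of_real (1 / sqrt (1 + (cmod g)\<^sup>2)) in
     (c, c * g * z ^ k, - c * cnj g * inverse z ^ k, c))"

fun nlft_mat :: "nat \<Rightarrow> (nat \<Rightarrow> complex) \<Rightarrow> complex \<Rightarrow> cmat2" where
  "nlft_mat 0 g z = (1, 0, 0, 1)"
| "nlft_mat (Suc m) g z = mmult2 (nlft_mat m g z) (nlft_factor (g m) m z)"

definition is_nlft :: "nat \<Rightarrow> (nat \<Rightarrow> complex) \<Rightarrow> (nat \<Rightarrow> complex) \<Rightarrow> (nat \<Rightarrow> complex) \<Rightarrow> bool" where
  "is_nlft n g a b \<longleftrightarrow> supp_in n g \<and> supp_in n a \<and> supp_in n b \<and>
     (\<forall>z. z \<noteq> 0 \<longrightarrow> nlft_mat n g z =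
        (laur_a n a z, laur_b n b z, - star (laur_b n b) z, star (laur_a n a) z))"

definition inv_nlft :: "nat \<Rightarrow> (nat \<Rightarrow> complex) \<Rightarrow> (nat \<Rightarrow> complex) \<Rightarrow> (nat \<Rightarrow> complex)" where
  "inv_nlft n a b = (THE g. is_nlft n g a b)"

definition norm_n :: "nat \<Rightarrow> (nat \<Rightarrow> complex) \<Rightarrow> real" where
  "norm_n n v = sqrt (\<Sum>k<n. (cmod (v k))\<^sup>2)"

definition dist_pair :: "nat \<Rightarrow> (nat \<Rightarrow> complex) \<times> (nat \<Rightarrow> complex) \<Rightarrow> (nat \<Rightarrow> complex) \<times> (nat \<Rightarrow> complex) \<Rightarrow> real" where
  "dist_pair n p q = sqrt ((norm_n n (\<lambda>k. fst p k - fst q k))\<^sup>2 + (norm_n n (\<lambda>k. snd p k - snd q k))\<^sup>2)"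

definition ex_a :: "nat \<Rightarrow> nat \<Rightarrow> nat \<Rightarrow> complex" where
  "ex_a n k j = (if j = 0 then complex_of_real (1 / real k)
     else if j = n - 1 then complex_of_real (sqrt (1/2 - 1 / (real k)\<^sup>2)) else 0)"

definition ex_b :: "nat \<Rightarrow> nat \<Rightarrow> nat \<Rightarrow> complex" where
  "ex_b n k j = (if j = 0 then complex_of_real (sqrt (1/2 - 1 / (real k)\<^sup>2))
     else if j = n - 1 then complex_of_real (- 1 / real k) else 0)"

end

theory Submission
  imports Defs
begin

(* The inverse NLFT is unique because the NLFT can be peeled off one layer at a time: for
   gamma supported in {0..m}, the constant coefficient of a is the product P of the normalising
   constants 1 / sqrt (1 + |gamma_j|^2) and the coefficient of z^m in b is P gamma_m, so
   gamma_m = b_m / a_0; the last factor has determinant 1 and can be cancelled.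
   The pair (a^(k), b^(k)) is the NLFT of gamma^(k) = (sqrt (k^2/2 - 1), 0, ..., 0, -1).
   Consecutive pairs differ by O(1/k^2), whereas the first entries of consecutive gamma^(k)
   differ by ((k+1)^2 - k^2) / 2 divided by sqrt ((k+1)^2/2 - 1) + sqrt (k^2/2 - 1) < (2k+1)/sqrt 2,
   i.e. by more than 1/sqrt 2. *)

definition det2 :: "cmat2 \<Rightarrow> complex" where
  "det2 M = (case M of (a, b, c, d) \<Rightarrow> a * d - b * c)"

lemma mmult2_one [simp]: "mmult2 (1, 0, 0, 1) M = M" "mmult2 M (1, 0, 0, 1) = M"
  by (cases M; simp add: mmult2_def)+

lemma mmult2_cancel_right:
  assumes eq: "mmult2 X M = mmult2 Y M" and det: "det2 M \<noteq> 0"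
  shows "X = Y"
proof -
  obtain a b c d where X: "X = (a, b, c, d)" by (cases X) auto
  obtain a' b' c' d' where Y: "Y = (a', b', c', d')" by (cases Y) auto
  obtain e f g h where M: "M = (e, f, g, h)" by (cases M) auto
  have "a * e + b * g = a' * e + b' * g" "a * f + b * h = a' * f + b' * h"
    "c * e + d * g = c' * e + d' * g" "c * f + d * h = c' * f + d' * h"
    using eq by (simp_all add: X Y M mmult2_def)
  then have "(a - a') * (e * h - f * g) = 0" "(b - b') * (e * h - f * g) = 0"
    "(c - c') * (e * h - f * g) = 0" "(d - d') * (e * h - f * g) = 0"
    by algebra+
  with det show ?thesis by (simp add: X Y M det2_def)
qed

definition nlft_scale :: "complex \<Rightarrow> real" where
  "nlft_scale g = 1 / sqrt (1 + (cmod g)\<^sup>2)"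

lemma nlft_scale_pos: "nlft_scale g > 0"
  by (simp add: nlft_scale_def add_pos_nonneg)

lemma nlft_factor_eq:
  "nlft_factor g k z = (let c = complex_of_real (nlft_scale g) in
     (c, c * g * z ^ k, - c * cnj g * inverse z ^ k, c))"
  by (simp add: nlft_factor_def nlft_scale_def)

lemma nlft_factor_0 [simp]: "nlft_factor 0 k z = (1, 0, 0, 1)"
  by (simp add: nlft_factor_def)

lemma det2_nlft_factor:
  assumes "z \<noteq> 0"
  shows "det2 (nlft_factor g k z) = 1"
proof -
  define c where "c = nlft_scale g"
  have "1 + (cmod g)\<^sup>2 > 0"
    by (simp add: add_pos_nonneg)
  then have "c\<^sup>2 * (1 + (cmod g)\<^sup>2) = 1"
    by (simp add: c_def nlft_scale_def power_divide)
  then have "complex_of_real c * complex_of_real c * (1 + g * cnj g) = 1"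
    by (metis complex_norm_square of_real_1 of_real_add of_real_mult power2_eq_square)
  moreover have "z ^ k * inverse z ^ k = 1"
    using assms by (simp add: power_inverse)
  ultimately show ?thesis
    unfolding det2_def nlft_factor_eq Let_def c_def[symmetric]
    by (simp add: algebra_simps)
qed

lemma sum_reflect_inverse_powers:
  fixes z :: "'a::field"
  assumes "z \<noteq> 0"
  shows "z ^ m * (\<Sum>i\<le>m. f i * inverse z ^ i) = (\<Sum>i\<le>m. f (m - i) * z ^ i)"
proof -
  have "z ^ m * (\<Sum>i\<le>m. f i * inverse z ^ i) = (\<Sum>i\<le>m. f i * z ^ (m - i))"
    unfolding sum_distrib_left
  proof (rule sum.cong)
    fix i assume "i \<in> {..m}"
    then have "z ^ m = z ^ (m - i) * z ^ i" by (simp add: power_add[symmetric])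
    then show "z ^ m * (f i * inverse z ^ i) = f i * z ^ (m - i)"
      using assms by (simp add: power_inverse field_simps)
  qed simp
  also have "\<dots> = (\<Sum>i\<le>m. f (m - i) * z ^ i)"
    by (rule sum.reindex_bij_witness[where i="\<lambda>i. m - i" and j="\<lambda>i. m - i"]) auto
  finally show ?thesis .
qed

lemma polyfun_nonzero_eq_coeffs:
  fixes u v :: "nat \<Rightarrow> complex"
  assumes "\<And>z. z \<noteq> 0 \<Longrightarrow> (\<Sum>i\<le>N. u i * z ^ i) = (\<Sum>i\<le>N. v i * z ^ i)" "i \<le> N"
  shows "u i = v i"
proof -
  have "- {0} \<subseteq> {z. (\<Sum>i\<le>N. (u i - v i) * z ^ i) = 0}"
    using assms(1) by (auto simp: left_diff_distrib sum_subtractf)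
  moreover have "infinite (- {0::complex})"
    by (simp add: infinite_UNIV_char_0)
  ultimately have "infinite {z. (\<Sum>i\<le>N. (u i - v i) * z ^ i) = 0}"
    using finite_subset by blast
  then show ?thesis
    using polyfun_finite_roots[of "\<lambda>i. u i - v i" N] assms(2) by auto
qed

text \<open>Coefficients of the top row of \<open>nlft_mat m g\<close> (see \<open>nlft_mat_top_row\<close>); they are
  indexed up to m rather than m - 1 so that the empty product m = 0 fits.\<close>

fun nlft_coeffs :: "nat \<Rightarrow> (nat \<Rightarrow> complex) \<Rightarrow> (nat \<Rightarrow> complex) \<times> (nat \<Rightarrow> complex)" where
  "nlft_coeffs 0 g = ((\<lambda>i. if i = 0 then 1 else 0), (\<lambda>i. 0))"
| "nlft_coeffs (Suc m) g = (let (\<alpha>, \<beta>) = nlft_coeffs m g; c = complex_of_real (nlft_scale (g m)) in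
     ((\<lambda>i. if i \<le> m then c * (\<alpha> i - cnj (g m) * \<beta> (m - i)) else 0),
      (\<lambda>i. if i \<le> m then c * (\<beta> i + g m * \<alpha> (m - i)) else 0)))"

declare nlft_coeffs.simps(2) [simp del]

lemma nlft_coeffs_b_top: "snd (nlft_coeffs m g) m = 0"
  by (cases m) (simp_all add: nlft_coeffs.simps case_prod_beta Let_def)

lemma nlft_coeffs_a_0: "fst (nlft_coeffs m g) 0 = of_real (\<Prod>j<m. nlft_scale (g j))"
proof (induction m)
  case (Suc m)
  then show ?case
    using nlft_coeffs_b_top[of m g] by (simp add: nlft_coeffs.simps case_prod_beta Let_def mult.commute)
qed simp

lemma nlft_coeffs_b_last:
  "snd (nlft_coeffs (Suc m) g) m = of_real (\<Prod>j<Suc m. nlft_scale (g j)) * g m"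
  using nlft_coeffs_a_0[of m g] nlft_coeffs_b_top[of m g]
  by (simp add: nlft_coeffs.simps case_prod_beta Let_def)

lemma nlft_mat_top_row:
  assumes "z \<noteq> 0"
  shows "fst (nlft_mat m g z) = (\<Sum>i\<le>m. fst (nlft_coeffs m g) i * inverse z ^ i)
       \<and> fst (snd (nlft_mat m g z)) = (\<Sum>i\<le>m. snd (nlft_coeffs m g) i * z ^ i)"
proof (induction m)
  case 0
  then show ?case by simp
next
  case (Suc m)
  obtain \<alpha> \<beta> where coeffs: "nlft_coeffs m g = (\<alpha>, \<beta>)" by (cases "nlft_coeffs m g") auto
  obtain A B C D where M: "nlft_mat m g z = (A, B, C, D)" by (cases "nlft_mat m g z") auto
  define c where "c = complex_of_real (nlft_scale (g m))"
  have F: "nlft_factor (g m) m z = (c, c * g m * z ^ m, - c * cnj (g m) * inverse z ^ m, c)"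
    by (simp add: nlft_factor_eq c_def Let_def)
  have A: "A = (\<Sum>i\<le>m. \<alpha> i * inverse z ^ i)" and B: "B = (\<Sum>i\<le>m. \<beta> i * z ^ i)"
    using Suc.IH by (simp_all add: M coeffs)
  have \<alpha>': "fst (nlft_coeffs (Suc m) g) = (\<lambda>i. if i \<le> m then c * (\<alpha> i - cnj (g m) * \<beta> (m - i)) else 0)"
    and \<beta>': "snd (nlft_coeffs (Suc m) g) = (\<lambda>i. if i \<le> m then c * (\<beta> i + g m * \<alpha> (m - i)) else 0)"
    unfolding c_def by (simp_all add: nlft_coeffs.simps coeffs Let_def)
  have "fst (nlft_mat (Suc m) g z) = c * (A - cnj (g m) * (inverse z ^ m * B))"
    by (simp add: M F mmult2_def algebra_simps)
  also have "inverse z ^ m * B = (\<Sum>i\<le>m. \<beta> (m - i) * inverse z ^ i)"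
    using sum_reflect_inverse_powers[of "inverse z" m \<beta>] assms by (simp add: B)
  also have "c * (A - cnj (g m) * \<dots>) = (\<Sum>i\<le>Suc m. fst (nlft_coeffs (Suc m) g) i * inverse z ^ i)"
    unfolding \<alpha>' by (simp add: A sum_subtractf sum_distrib_left right_diff_distrib mult_ac)
  finally have a: "fst (nlft_mat (Suc m) g z) = \<dots>" .
  have "fst (snd (nlft_mat (Suc m) g z)) = c * (B + g m * (z ^ m * A))"
    by (simp add: M F mmult2_def algebra_simps)
  also have "z ^ m * A = (\<Sum>i\<le>m. \<alpha> (m - i) * z ^ i)"
    using sum_reflect_inverse_powers[of z m \<alpha>] assms by (simp add: A)
  also have "c * (B + g m * \<dots>) = (\<Sum>i\<le>Suc m. snd (nlft_coeffs (Suc m) g) i * z ^ i)"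
    unfolding \<beta>' by (simp add: B sum.distrib sum_distrib_left distrib_left mult_ac)
  finally show ?case using a by blast
qed

lemma nlft_coeffs_determined:
  assumes "\<And>z. z \<noteq> 0 \<Longrightarrow> nlft_mat m g z = nlft_mat m g' z" and "i \<le> m"
  shows "fst (nlft_coeffs m g) i = fst (nlft_coeffs m g') i"
    and "snd (nlft_coeffs m g) i = snd (nlft_coeffs m g') i"
proof -
  show "fst (nlft_coeffs m g) i = fst (nlft_coeffs m g') i"
  proof (rule polyfun_nonzero_eq_coeffs[OF _ assms(2)])
    fix w :: complex
    assume "w \<noteq> 0"
    then show "(\<Sum>i\<le>m. fst (nlft_coeffs m g) i * w ^ i) = (\<Sum>i\<le>m. fst (nlft_coeffs m g') i * w ^ i)"
      using assms(1)[of "inverse w"] nlft_mat_top_row[of "inverse w" m g] nlft_mat_top_row[of "inverse w" m g']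
      by (simp del: nlft_mat.simps)
  qed
  show "snd (nlft_coeffs m g) i = snd (nlft_coeffs m g') i"
  proof (rule polyfun_nonzero_eq_coeffs[OF _ assms(2)])
    fix z :: complex
    assume "z \<noteq> 0"
    then show "(\<Sum>i\<le>m. snd (nlft_coeffs m g) i * z ^ i) = (\<Sum>i\<le>m. snd (nlft_coeffs m g') i * z ^ i)"
      using assms(1)[of z] nlft_mat_top_row[of z m g] nlft_mat_top_row[of z m g']
      by (simp del: nlft_mat.simps)
  qed
qed

lemma nlft_mat_last_determined:
  assumes "\<And>z. z \<noteq> 0 \<Longrightarrow> nlft_mat (Suc m) g z = nlft_mat (Suc m) g' z"
  shows "g m = g' m"
proof -
  define P where "P h = (\<Prod>j<Suc m. nlft_scale (h j))" for h
  have "fst (nlft_coeffs (Suc m) g) 0 = fst (nlft_coeffs (Suc m) g') 0"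
    using assms by (rule nlft_coeffs_determined(1)) simp_all
  then have "P g = P g'"
    by (simp only: P_def nlft_coeffs_a_0 of_real_eq_iff)
  have "snd (nlft_coeffs (Suc m) g) m = snd (nlft_coeffs (Suc m) g') m"
    using assms by (rule nlft_coeffs_determined(2)) simp_all
  then have "of_real (P g) * g m = of_real (P g') * g' m"
    by (simp only: P_def nlft_coeffs_b_last)
  moreover have "P g > 0"
    by (simp add: P_def prod_pos nlft_scale_pos)
  ultimately show ?thesis
    using \<open>P g = P g'\<close> by simp
qed

lemma nlft_mat_Suc_cancel:
  assumes "nlft_mat (Suc m) g z = nlft_mat (Suc m) g' z" "g m = g' m" "z \<noteq> 0"
  shows "nlft_mat m g z = nlft_mat m g' z"
  using assms mmult2_cancel_right[of _ "nlft_factor (g m) m z"] det2_nlft_factor[of z] by simp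

lemma nlft_mat_inj:
  assumes "\<And>z. z \<noteq> 0 \<Longrightarrow> nlft_mat m g z = nlft_mat m g' z" "j < m"
  shows "g j = g' j"
  using assms
proof (induction m)
  case (Suc m)
  have "g m = g' m"
    using Suc.prems(1) by (rule nlft_mat_last_determined)
  moreover from this have "\<And>z. z \<noteq> 0 \<Longrightarrow> nlft_mat m g z = nlft_mat m g' z"
    using Suc.prems(1) nlft_mat_Suc_cancel by blast
  ultimately show ?case
    using Suc by (cases "j = m") auto
qed simp

lemma inv_nlft_eqI:
  assumes "is_nlft n g a b"
  shows "inv_nlft n a b = g"
  unfolding inv_nlft_def
proof (rule the_equality)
  fix g'
  assume g': "is_nlft n g' a b"
  show "g' = g"
  proof
    fix j
    show "g' j = g j"
    proof (cases "j < n")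
      case True
      with assms g' show ?thesis
        unfolding is_nlft_def by (intro nlft_mat_inj[of n g' g]) auto
    next
      case False
      with assms g' show ?thesis
        unfolding is_nlft_def supp_in_def by auto
    qed
  qed
qed (fact assms)

lemma nlft_mat_single_layer:
  assumes "0 < m" and "\<And>j. 0 < j \<Longrightarrow> j < m \<Longrightarrow> g j = 0"
  shows "nlft_mat m g z = nlft_factor (g 0) 0 z"
  using assms
proof (induction m)
  case (Suc m)
  then show ?case
    by (cases "m = 0") simp_all
qed simp

lemma sum_lessThan_ends:
  fixes h :: "nat \<Rightarrow> 'a::comm_monoid_add"
  assumes "n \<ge> 2" and "\<And>j. j < n \<Longrightarrow> j \<noteq> 0 \<Longrightarrow> j \<noteq> n - 1 \<Longrightarrow> h j = 0"
  shows "(\<Sum>j<n. h j) = h 0 + h (n - 1)"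
proof -
  have "(\<Sum>j<n. h j) = (\<Sum>j\<in>{0, n - 1}. h j)"
    by (rule sum.mono_neutral_right) (use assms in auto)
  also have "\<dots> = h 0 + h (n - 1)"
    using assms(1) by simp
  finally show ?thesis .
qed

lemma norm_n_ends:
  assumes "n \<ge> 2" and "\<And>j. j < n \<Longrightarrow> j \<noteq> 0 \<Longrightarrow> j \<noteq> n - 1 \<Longrightarrow> v j = 0"
    and "v 0 = of_real x" and "v (n - 1) = of_real y"
  shows "norm_n n v = sqrt (x\<^sup>2 + y\<^sup>2)"
  unfolding norm_n_def using assms by (subst sum_lessThan_ends) auto

definition ex_t :: "nat \<Rightarrow> real" where
  "ex_t k = sqrt (1/2 - 1 / (real k)\<^sup>2)"

definition ex_gamma :: "nat \<Rightarrow> nat \<Rightarrow> nat \<Rightarrow> complex" where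
  "ex_gamma n k j = (if j = 0 then complex_of_real (sqrt ((real k)\<^sup>2 / 2 - 1))
     else if j = n - 1 then -1 else 0)"

lemma inverse_real_sq_le_quarter:
  assumes "k \<ge> 2"
  shows "1 / (real k)\<^sup>2 \<le> 1/4"
proof -
  have "(2::real)\<^sup>2 \<le> (real k)\<^sup>2"
    using assms by (intro power_mono) simp_all
  then show ?thesis
    by (simp add: divide_simps)
qed

lemma ex_t_sq:
  assumes "k \<ge> 2"
  shows "(ex_t k)\<^sup>2 = 1/2 - 1 / (real k)\<^sup>2"
  using inverse_real_sq_le_quarter[OF assms] by (simp add: ex_t_def)

lemma ex_t_ge_half:
  assumes "k \<ge> 2"
  shows "ex_t k \<ge> 1/2"
proof -
  have "(1/2)\<^sup>2 \<le> 1/2 - 1 / (real k)\<^sup>2"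
    using inverse_real_sq_le_quarter[OF assms] by (simp add: power2_eq_square)
  then show ?thesis
    unfolding ex_t_def by (rule real_le_rsqrt)
qed

lemma real_mult_ex_t:
  assumes "k \<ge> 2"
  shows "real k * ex_t k = sqrt ((real k)\<^sup>2 / 2 - 1)"
proof -
  have "real k * ex_t k = sqrt ((real k)\<^sup>2 * (1/2 - 1 / (real k)\<^sup>2))"
    by (simp add: ex_t_def real_sqrt_mult)
  also have "(real k)\<^sup>2 * (1/2 - 1 / (real k)\<^sup>2) = (real k)\<^sup>2 / 2 - 1"
    using assms by (simp add: field_simps)
  finally show ?thesis .
qed

lemma nlft_scale_ex_gamma:
  assumes "k \<ge> 2"
  shows "nlft_scale (ex_gamma n k 0) * nlft_scale (-1) = 1 / real k"
proof -
  have "(real k)\<^sup>2 / 2 - 1 \<ge> 0"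
    using inverse_real_sq_le_quarter[OF assms] assms by (simp add: field_simps)
  then have "1 + (cmod (ex_gamma n k 0))\<^sup>2 = (real k)\<^sup>2 / 2"
    by (simp add: ex_gamma_def)
  then have "sqrt (1 + (cmod (ex_gamma n k 0))\<^sup>2) * sqrt (1 + (cmod (-1::complex))\<^sup>2) = real k"
    by (simp add: real_sqrt_mult[symmetric])
  then show ?thesis
    by (simp add: nlft_scale_def divide_simps)
qed

lemma laur_ex:
  assumes "n \<ge> 2"
  shows "laur_a n (ex_a n k) z = of_real (1 / real k) + of_real (ex_t k) * inverse z ^ (n - 1)"
    and "star (laur_a n (ex_a n k)) z = of_real (1 / real k) + of_real (ex_t k) * z ^ (n - 1)"
    and "laur_b n (ex_b n k) z = of_real (ex_t k) - of_real (1 / real k) * z ^ (n - 1)"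
    and "star (laur_b n (ex_b n k)) z = of_real (ex_t k) - of_real (1 / real k) * inverse z ^ (n - 1)"
proof -
  have a: "laur_a n (ex_a n k) w = of_real (1 / real k) + of_real (ex_t k) * inverse w ^ (n - 1)" for w
    unfolding laur_a_def using assms by (subst sum_lessThan_ends) (auto simp: ex_a_def ex_t_def)
  have b: "laur_b n (ex_b n k) w = of_real (ex_t k) - of_real (1 / real k) * w ^ (n - 1)" for w
    unfolding laur_b_def using assms by (subst sum_lessThan_ends) (auto simp: ex_b_def ex_t_def)
  show "laur_a n (ex_a n k) z = of_real (1 / real k) + of_real (ex_t k) * inverse z ^ (n - 1)"
    by (rule a)
  show "laur_b n (ex_b n k) z = of_real (ex_t k) - of_real (1 / real k) * z ^ (n - 1)"
    by (rule b)
  show "star (laur_a n (ex_a n k)) z = of_real (1 / real k) + of_real (ex_t k) * z ^ (n - 1)"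
    unfolding star_def a by simp
  show "star (laur_b n (ex_b n k)) z = of_real (ex_t k) - of_real (1 / real k) * inverse z ^ (n - 1)"
    unfolding star_def b by (simp add: divide_inverse power_inverse)
qed

lemma ex_in_S_set:
  assumes n: "n \<ge> 2" and k: "k \<ge> 2"
  shows "(ex_a n k, ex_b n k) \<in> S_set n"
proof -
  have "laur_a n (ex_a n k) z * star (laur_a n (ex_a n k)) z
      + laur_b n (ex_b n k) z * star (laur_b n (ex_b n k)) z = 1" if "z \<noteq> 0" for z
  proof -
    define x where "x = complex_of_real (1 / real k)"
    define t where "t = complex_of_real (ex_t k)"
    have "x * x + t * t = of_real ((1 / real k)\<^sup>2 + (ex_t k)\<^sup>2)"
      by (simp add: x_def t_def power2_eq_square)
    then have sq: "x * x + t * t = 1/2"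
      using ex_t_sq[OF k] by (simp add: power_divide)
    have "(x + t * inverse z ^ (n - 1)) * (x + t * z ^ (n - 1))
        + (t - x * z ^ (n - 1)) * (t - x * inverse z ^ (n - 1))
        = (x * x + t * t) * (1 + z ^ (n - 1) * inverse z ^ (n - 1))"
      by (simp add: algebra_simps)
    also have "\<dots> = 1"
      using that sq by (simp add: power_inverse)
    finally show ?thesis
      using laur_ex[OF n] by (simp add: x_def t_def)
  qed
  moreover have "supp_in n (ex_a n k)" "supp_in n (ex_b n k)"
    using n by (auto simp: supp_in_def ex_a_def ex_b_def)
  ultimately show ?thesis
    using k by (auto simp: S_set_def ex_a_def)
qed

lemma nlft_mat_ex_gamma:
  assumes n: "n \<ge> 2" and k: "k \<ge> 2"
  shows "nlft_mat n (ex_gamma n k) z =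
    (of_real (1 / real k) + of_real (ex_t k) * inverse z ^ (n - 1),
     of_real (ex_t k) - of_real (1 / real k) * z ^ (n - 1),
     - (of_real (ex_t k) - of_real (1 / real k) * inverse z ^ (n - 1)),
     of_real (1 / real k) + of_real (ex_t k) * z ^ (n - 1))"
proof -
  define m where "m = n - 1"
  define g0 where "g0 = ex_gamma n k 0"
  define c0 where "c0 = complex_of_real (nlft_scale g0)"
  define c1 where "c1 = complex_of_real (nlft_scale (-1))"
  have c: "c0 * c1 = of_real (1 / real k)"
    using nlft_scale_ex_gamma[OF k, of n] by (simp add: c0_def c1_def g0_def flip: of_real_mult)
  have "g0 = of_real (real k * ex_t k)"
    by (simp add: g0_def ex_gamma_def real_mult_ex_t[OF k])
  then have "c0 * c1 * g0 = of_real (1 / real k * (real k * ex_t k))"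
    by (simp only: c of_real_mult)
  with k have t: "c0 * c1 * g0 = of_real (ex_t k)"
    by simp
  have "nlft_mat m (ex_gamma n k) z = nlft_factor g0 0 z"
    unfolding g0_def using n by (intro nlft_mat_single_layer) (auto simp: m_def ex_gamma_def)
  moreover have "ex_gamma n k m = -1" and "n = Suc m"
    using n by (simp_all add: ex_gamma_def m_def)
  ultimately have "nlft_mat n (ex_gamma n k) z = mmult2 (nlft_factor g0 0 z) (nlft_factor (-1) m z)"
    by simp
  also have "\<dots> = mmult2 (c0, c0 * g0, - (c0 * g0), c0) (c1, - (c1 * z ^ m), c1 * inverse z ^ m, c1)"
    by (simp add: nlft_factor_eq Let_def c0_def c1_def g0_def ex_gamma_def)
  also have "\<dots> = (c0 * c1 + c0 * c1 * g0 * inverse z ^ m, c0 * c1 * g0 - c0 * c1 * z ^ m,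
      - (c0 * c1 * g0 - c0 * c1 * inverse z ^ m), c0 * c1 + c0 * c1 * g0 * z ^ m)"
    by (simp add: mmult2_def algebra_simps)
  finally show ?thesis
    by (simp only: t, simp only: c m_def)
qed

lemma ex_gamma_is_nlft:
  assumes n: "n \<ge> 2" and k: "k \<ge> 2"
  shows "is_nlft n (ex_gamma n k) (ex_a n k) (ex_b n k)"
proof -
  have "supp_in n (ex_gamma n k)" "supp_in n (ex_a n k)" "supp_in n (ex_b n k)"
    using n by (auto simp: supp_in_def ex_gamma_def ex_a_def ex_b_def)
  then show ?thesis
    unfolding is_nlft_def by (simp add: nlft_mat_ex_gamma[OF n k] laur_ex[OF n])
qed

lemma inv_nlft_ex:
  assumes "n \<ge> 2" and "k \<ge> 2"
  shows "inv_nlft n (ex_a n k) (ex_b n k) = ex_gamma n k"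
  using ex_gamma_is_nlft[OF assms] by (rule inv_nlft_eqI)

lemma ex_t_increment_bound:
  assumes "k \<ge> 2"
  shows "0 \<le> ex_t (k + 1) - ex_t k" and "ex_t (k + 1) - ex_t k \<le> 1 / (real k)\<^sup>2"
proof -
  define s where "s = ex_t (k + 1) + ex_t k"
  define d where "d = ex_t (k + 1) - ex_t k"
  have "1 / (real k + 1)\<^sup>2 \<le> 1 / (real k)\<^sup>2"
    using assms by (intro divide_left_mono power_mono) auto
  moreover have "(ex_t (k + 1))\<^sup>2 = 1/2 - 1 / (real k + 1)\<^sup>2" "(ex_t k)\<^sup>2 = 1/2 - 1 / (real k)\<^sup>2"
    using ex_t_sq[of "k + 1"] ex_t_sq[of k] assms by simp_all
  moreover have "d * s = (ex_t (k + 1))\<^sup>2 - (ex_t k)\<^sup>2"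
    by (simp add: d_def s_def power2_eq_square algebra_simps)
  ultimately have ds: "0 \<le> d * s" "d * s \<le> 1 / (real k)\<^sup>2"
    by simp_all
  have "1 \<le> s"
    using ex_t_ge_half[of k] ex_t_ge_half[of "k + 1"] assms by (simp add: s_def)
  then have "0 \<le> d"
    using ds(1) by (simp add: zero_le_mult_iff)
  moreover from this \<open>1 \<le> s\<close> have "d \<le> d * s"
    using mult_left_mono[of 1 s d] by simp
  ultimately show "0 \<le> ex_t (k + 1) - ex_t k" "ex_t (k + 1) - ex_t k \<le> 1 / (real k)\<^sup>2"
    using ds(2) by (simp_all add: d_def)
qed

lemma ex_ab_increment_bound:
  assumes n: "n \<ge> 2" and k: "k \<ge> 2"
  shows "(norm_n n (\<lambda>j. ex_a n (k+1) j - ex_a n k j))\<^sup>2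
       + (norm_n n (\<lambda>j. ex_b n (k+1) j - ex_b n k j))\<^sup>2 \<le> 10 / (real k) ^ 4"
proof -
  define d1 where "d1 = 1 / real k - 1 / real (k + 1)"
  define d2 where "d2 = ex_t (k + 1) - ex_t k"
  have "n - 1 \<noteq> 0"
    using n by simp
  then have "norm_n n (\<lambda>j. ex_a n (k+1) j - ex_a n k j) = sqrt ((- d1)\<^sup>2 + d2\<^sup>2)"
    and "norm_n n (\<lambda>j. ex_b n (k+1) j - ex_b n k j) = sqrt (d2\<^sup>2 + d1\<^sup>2)"
    using n by (intro norm_n_ends; simp add: ex_a_def ex_b_def d1_def d2_def ex_t_def)+
  then have "(norm_n n (\<lambda>j. ex_a n (k+1) j - ex_a n k j))\<^sup>2
       + (norm_n n (\<lambda>j. ex_b n (k+1) j - ex_b n k j))\<^sup>2 = 2 * (d1\<^sup>2 + d2\<^sup>2)"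
    by simp
  moreover have "d1 = 1 / (real k * (real k + 1))"
    using k by (simp add: d1_def field_simps)
  then have "\<bar>d1\<bar> \<le> 1 / (real k)\<^sup>2"
    using k by (simp add: power2_eq_square divide_left_mono)
  moreover have "\<bar>d2\<bar> \<le> 1 / (real k)\<^sup>2"
    using ex_t_increment_bound[OF k] by (simp add: d2_def)
  ultimately have "(norm_n n (\<lambda>j. ex_a n (k+1) j - ex_a n k j))\<^sup>2
       + (norm_n n (\<lambda>j. ex_b n (k+1) j - ex_b n k j))\<^sup>2 \<le> 4 * (1 / (real k)\<^sup>2)\<^sup>2"
    using abs_le_square_iff[of d1 "1 / (real k)\<^sup>2"] abs_le_square_iff[of d2 "1 / (real k)\<^sup>2"] by simp
  also have "\<dots> \<le> 10 / (real k) ^ 4"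
    by (simp add: power_divide divide_right_mono flip: power_mult)
  finally show ?thesis .
qed

lemma sqrt_half_sq_minus_one_increment:
  fixes x :: real
  assumes "2 \<le> x"
  shows "1 / sqrt 2 \<le> sqrt ((x + 1)\<^sup>2 / 2 - 1) - sqrt (x\<^sup>2 / 2 - 1)"
proof -
  define u where "u = sqrt (x\<^sup>2 / 2 - 1)"
  define v where "v = sqrt ((x + 1)\<^sup>2 / 2 - 1)"
  define r :: real where "r = 1 / sqrt 2"
  have "x\<^sup>2 \<ge> 2\<^sup>2" "(x + 1)\<^sup>2 \<ge> 2\<^sup>2"
    using assms by (intro power_mono; simp)+
  then have u: "u\<^sup>2 = x\<^sup>2 / 2 - 1" "0 \<le> u" and v: "v\<^sup>2 = (x + 1)\<^sup>2 / 2 - 1" "0 < v"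
    by (simp_all add: u_def v_def)
  have r: "r\<^sup>2 = 1 / 2" "0 < r"
    by (simp_all add: r_def power_divide)
  have "u\<^sup>2 \<le> (x * r)\<^sup>2" "v\<^sup>2 \<le> ((x + 1) * r)\<^sup>2"
    unfolding u(1) v(1) power_mult_distrib r(1) by simp_all
  then have "u \<le> x * r" "v \<le> (x + 1) * r"
    using assms r(2) by (auto intro: power2_le_imp_le)
  then have "(v + u) * r \<le> (2 * x + 1) * r * r"
    using r(2) by (intro mult_right_mono) (simp_all add: algebra_simps)
  also have "\<dots> = (2 * x + 1) * r\<^sup>2"
    by (simp add: power2_eq_square)
  also have "\<dots> = v\<^sup>2 - u\<^sup>2"
    unfolding u(1) v(1) r(1) by (simp add: power2_eq_square field_simps)
  also have "\<dots> = (v + u) * (v - u)"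
    by (simp add: power2_eq_square algebra_simps)
  finally have "r \<le> v - u"
    using u(2) v(2) by (simp add: mult_le_cancel_left_pos)
  then show ?thesis
    by (simp add: u_def v_def r_def)
qed

lemma ex_gamma_increment_bound:
  assumes n: "n \<ge> 2" and k: "k \<ge> 2"
  shows "norm_n n (\<lambda>j. ex_gamma n (k+1) j - ex_gamma n k j) \<ge> 1 / sqrt 2"
proof -
  have "norm_n n (\<lambda>j. ex_gamma n (k+1) j - ex_gamma n k j)
      = sqrt ((sqrt ((real k + 1)\<^sup>2 / 2 - 1) - sqrt ((real k)\<^sup>2 / 2 - 1))\<^sup>2 + 0\<^sup>2)"
    using n by (intro norm_n_ends) (simp_all add: ex_gamma_def add.commute)
  then show ?thesis
    using sqrt_half_sq_minus_one_increment[of "real k"] k by simp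
qed

lemma ex_dist_pair_tendsto_0:
  assumes "n \<ge> 2"
  shows "(\<lambda>k. dist_pair n (ex_a n (k + 1), ex_b n (k + 1)) (ex_a n k, ex_b n k)) \<longlonglongrightarrow> 0"
proof -
  have "(\<lambda>k. 10 / real k ^ 4) \<longlonglongrightarrow> 0"
    by (intro tendsto_divide_0[OF tendsto_const] filterlim_at_top_imp_at_infinity
        filterlim_pow_at_top filterlim_real_sequentially) simp
  then have lim: "(\<lambda>k. sqrt (10 / real k ^ 4)) \<longlonglongrightarrow> 0"
    using tendsto_real_sqrt by fastforce
  have le: "\<forall>\<^sub>F k in sequentially.
      dist_pair n (ex_a n (k + 1), ex_b n (k + 1)) (ex_a n k, ex_b n k) \<le> sqrt (10 / real k ^ 4)"
    using eventually_ge_at_top[of 2]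
  proof eventually_elim
    case (elim k)
    from ex_ab_increment_bound[OF assms elim] show ?case
      by (simp add: dist_pair_def)
  qed
  show ?thesis
    by (rule tendsto_sandwich[OF _ le tendsto_const lim]) (simp add: dist_pair_def)
qed

lemma ex_sequence_properties:
  assumes n: "n \<ge> 2" and k: "k \<ge> 2"
  shows "(ex_a n k, ex_b n k) \<in> S_set n
      \<and> (norm_n n (\<lambda>j. ex_a n (k+1) j - ex_a n k j))\<^sup>2
        + (norm_n n (\<lambda>j. ex_b n (k+1) j - ex_b n k j))\<^sup>2 \<le> 10 / (real k) ^ 4
      \<and> norm_n n (\<lambda>j. inv_nlft n (ex_a n (k+1)) (ex_b n (k+1)) j
                       - inv_nlft n (ex_a n k) (ex_b n k) j) \<ge> 1 / sqrt 2"
  using ex_in_S_set[OF n k] ex_ab_increment_bound[OF n k] ex_gamma_increment_bound[OF n k]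
    inv_nlft_ex[OF n k] inv_nlft_ex[OF n, of "k + 1"] k
  by simp

lemma not_uniformly_continuous_by_sequences:
  fixes d e :: "'a \<Rightarrow> 'a \<Rightarrow> real"
  assumes "\<forall>\<^sub>F k in sequentially. p k \<in> S \<and> q k \<in> S \<and> c \<le> e (p k) (q k)"
    and "(\<lambda>k. d (p k) (q k)) \<longlonglongrightarrow> 0" and "c > 0"
  shows "\<not> (\<forall>\<epsilon>>0. \<exists>\<delta>>0. \<forall>x\<in>S. \<forall>y\<in>S. d x y < \<delta> \<longrightarrow> e x y < \<epsilon>)"
proof
  assume "\<forall>\<epsilon>>0. \<exists>\<delta>>0. \<forall>x\<in>S. \<forall>y\<in>S. d x y < \<delta> \<longrightarrow> e x y < \<epsilon>"
  then obtain \<delta> where "\<delta> > 0" and \<delta>: "\<forall>x\<in>S. \<forall>y\<in>S. d x y < \<delta> \<longrightarrow> e x y < c"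
    using \<open>c > 0\<close> by blast
  from assms(2) \<open>\<delta> > 0\<close> have "\<forall>\<^sub>F k in sequentially. d (p k) (q k) < \<delta>"
    by (rule order_tendstoD(2))
  with assms(1) have "\<forall>\<^sub>F k in sequentially. False"
    by eventually_elim (use \<delta> in force)
  then show False
    by simp
qed

theorem mainTheorem10:
  fixes n :: nat
  assumes "n \<ge> 2"
  shows "\<not> (\<forall>\<epsilon>>0. \<exists>\<delta>>0. \<forall>p\<in>S_set n. \<forall>q\<in>S_set n.
             dist_pair n p q < \<delta> \<longrightarrow>
             norm_n n (\<lambda>j. inv_nlft n (fst p) (snd p) j - inv_nlft n (fst q) (snd q) j) < \<epsilon>)
         \<and> (\<forall>k::nat. k \<ge> 2 \<longrightarrow>
              (ex_a n k, ex_b n k) \<in> S_set n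
            \<and> (norm_n n (\<lambda>j. ex_a n (k+1) j - ex_a n k j))\<^sup>2
                + (norm_n n (\<lambda>j. ex_b n (k+1) j - ex_b n k j))\<^sup>2 \<le> 10 / (real k) ^ 4
            \<and> norm_n n (\<lambda>j. inv_nlft n (ex_a n (k+1)) (ex_b n (k+1)) j
                             - inv_nlft n (ex_a n k) (ex_b n k) j) \<ge> 1 / sqrt 2)"
proof -
  note ex = ex_sequence_properties[OF assms]
  have "\<forall>\<^sub>F k in sequentially. (ex_a n (k + 1), ex_b n (k + 1)) \<in> S_set n \<and> (ex_a n k, ex_b n k) \<in> S_set n
      \<and> 1 / sqrt 2 \<le> norm_n n (\<lambda>j. inv_nlft n (ex_a n (k + 1)) (ex_b n (k + 1)) j
                                    - inv_nlft n (ex_a n k) (ex_b n k) j)"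
    using eventually_ge_at_top[of 2]
  proof eventually_elim
    case (elim k)
    with ex[of k] ex[of "k + 1"] show ?case
      by simp
  qed
  then show ?thesis
    using ex ex_dist_pair_tendsto_0[OF assms]
      not_uniformly_continuous_by_sequences[where S = "S_set n" and d = "dist_pair n"
        and e = "\<lambda>p q. norm_n n (\<lambda>j. inv_nlft n (fst p) (snd p) j - inv_nlft n (fst q) (snd q) j)"
        and p = "\<lambda>k. (ex_a n (k + 1), ex_b n (k + 1))" and q = "\<lambda>k. (ex_a n k, ex_b n k)"
        and c = "1 / sqrt 2"]
    by simp
qed

end
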